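(* For every positive integer $n$, $UQ(\mathrm{OMB}_n)=1$ and $UQC(\mathrm{DOMB}_n)\ge \frac{\log n-3}{2}$.
   Context: For $x\in\{0,1\}^n$, $\mathrm{OMB}_n(x)=k \bmod 2$ where $k$ is the largest index with $x_k=1$ ($k=0$ if $x=0^n$). For $a,b\in\{0,1\}^n$, $\mathrm{DOMB}_n(a,b)=\mathrm{OMB}_n(a\wedge b)$, where $a\wedge b$ is the bitwise AND. $UQ(f)$ is the minimum number of oracle queries (oracle $O_x:|i,b,z\rangle\mapsto|i,b\oplus x_i,z\rangle$) of a quantum query algorithm that on every input outputs $f(x)$ with probability strictly greater than $1/2$. $UQC(g)$ for $g:\{0,1\}^{n_1}\times\{0,1\}^{n_2}\rightarrow\{0,1\}$ is the minimum number of qubits communicated in a two-party (two-way, no prior shared entanglement) quantum communication protocol that on every input outputs $g$ with probability strictly greater than $1/2$. $\log$ is base 2. *)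

theory Defs
  imports "HOL-Analysis.Analysis"
begin

text \<open>An n-bit string x in {0,1}^n is a predicate on indices 1..n (True = bit 1),
  normalised to be False outside {1..n}.\<close>

definition bits :: "nat \<Rightarrow> (nat \<Rightarrow> bool) set" where
  "bits n = {x. \<forall>i. x i \<longrightarrow> i \<in> {1..n}}"

definition OMB :: "nat \<Rightarrow> (nat \<Rightarrow> bool) \<Rightarrow> bool" where
  "OMB n x = (let k = (if \<exists>i\<in>{1..n}. x i then (GREATEST i. i \<in> {1..n} \<and> x i) else 0)
              in odd k)"

definition DOMB :: "nat \<Rightarrow> (nat \<Rightarrow> bool) \<Rightarrow> (nat \<Rightarrow> bool) \<Rightarrow> bool" where
  "DOMB n a b = OMB n (\<lambda>i. a i \<and> b i)"

definition unitary_on :: "'a set \<Rightarrow> ('a \<Rightarrow> 'a \<Rightarrow> complex) \<Rightarrow> bool" where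
  "unitary_on S U \<longleftrightarrow>
     (\<forall>i\<in>S. \<forall>j\<in>S. (\<Sum>k\<in>S. U i k * cnj (U j k)) = (if i = j then 1 else 0)) \<and>
     (\<forall>i\<in>S. \<forall>j\<in>S. (\<Sum>k\<in>S. cnj (U k i) * U k j) = (if i = j then 1 else 0))"

definition apply_on :: "'a set \<Rightarrow> ('a \<Rightarrow> 'a \<Rightarrow> complex) \<Rightarrow> ('a \<Rightarrow> complex) \<Rightarrow> ('a \<Rightarrow> complex)" where
  "apply_on S U v = (\<lambda>i. \<Sum>j\<in>S. U i j * v j)"

definition ket :: "'a \<Rightarrow> ('a \<Rightarrow> complex)" where
  "ket a = (\<lambda>i. if i = a then 1 else 0)"

text \<open>Basis states |i,b,z> with query index i in {1..n}, target bit b, workspace z < w.\<close>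

definition QB :: "nat \<Rightarrow> nat \<Rightarrow> (nat \<times> bool \<times> nat) set" where
  "QB n w = {1..n} \<times> (UNIV :: bool set) \<times> {0..<w}"

definition query_op :: "(nat \<Rightarrow> bool) \<Rightarrow> (nat \<times> bool \<times> nat \<Rightarrow> complex) \<Rightarrow> (nat \<times> bool \<times> nat \<Rightarrow> complex)" where
  "query_op x v = (\<lambda>(i, b, z). v (i, b \<noteq> x i, z))"

text \<open>Final state of the algorithm U_T O_x ... U_1 O_x U_0 |1,0,0>, where Us = [U_1,...,U_T].\<close>

definition query_final ::
  "nat \<Rightarrow> nat \<Rightarrow> (nat \<Rightarrow> bool) \<Rightarrow> (nat \<times> bool \<times> nat \<Rightarrow> nat \<times> bool \<times> nat \<Rightarrow> complex)
   \<Rightarrow> (nat \<times> bool \<times> nat \<Rightarrow> nat \<times> bool \<times> nat \<Rightarrow> complex) list \<Rightarrow> (nat \<times> bool \<times> nat \<Rightarrow> complex)" where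
  "query_final n w x U0 Us =
     foldl (\<lambda>v U. apply_on (QB n w) U (query_op x v)) (apply_on (QB n w) U0 (ket (1, False, 0))) Us"

definition UQ_computes :: "nat \<Rightarrow> ((nat \<Rightarrow> bool) \<Rightarrow> bool) \<Rightarrow> nat \<Rightarrow> bool" where
  "UQ_computes n f T \<longleftrightarrow>
     (\<exists>w U0 Us out. 0 < w \<and> length Us = T \<and> unitary_on (QB n w) U0 \<and>
        (\<forall>U\<in>set Us. unitary_on (QB n w) U) \<and>
        (\<forall>x\<in>bits n. (\<Sum>s\<in>{s\<in>QB n w. out s = f x}. (cmod (query_final n w x U0 Us s))\<^sup>2) > 1/2))"

definition UQ :: "nat \<Rightarrow> ((nat \<Rightarrow> bool) \<Rightarrow> bool) \<Rightarrow> nat" where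
  "UQ n f = (LEAST T. UQ_computes n f T)"

text \<open>The global system consists of qubits 0..N-1; a computational basis state is the set of qubits
  that are 1.  Every qubit is owned by one party at each time (False = Alice, True = Bob).
  A step is either a local unitary of a party on the qubits it currently owns, depending on that
  party's input, or the transmission of one qubit to the other party (cost 1 qubit).
  No prior entanglement: the initial state is |0...0>.\<close>

datatype cstep =
    Local bool "(nat \<Rightarrow> bool) \<Rightarrow> nat set \<Rightarrow> nat set \<Rightarrow> complex"
  | Send nat

definition owned :: "nat \<Rightarrow> (nat \<Rightarrow> bool) \<Rightarrow> bool \<Rightarrow> nat set" where
  "owned N own p = {q. q < N \<and> own q = p}"

definition local_op :: "nat \<Rightarrow> nat set \<Rightarrow> (nat set \<Rightarrow> nat set \<Rightarrow> complex)
    \<Rightarrow> (nat set \<Rightarrow> complex) \<Rightarrow> (nat set \<Rightarrow> complex)" where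
  "local_op N S M v = (\<lambda>z. \<Sum>z'\<in>Pow {0..<N}. (if z - S = z' - S then M (z \<inter> S) (z' \<inter> S) else 0) * v z')"

fun cstep_sem :: "nat \<Rightarrow> (nat \<Rightarrow> bool) \<Rightarrow> (nat \<Rightarrow> bool) \<Rightarrow> cstep
    \<Rightarrow> (nat \<Rightarrow> bool) \<times> (nat set \<Rightarrow> complex) \<Rightarrow> (nat \<Rightarrow> bool) \<times> (nat set \<Rightarrow> complex)" where
  "cstep_sem N a b (Local p M) (own, v) =
     (own, local_op N (owned N own p) (M (if p then b else a)) v)"
| "cstep_sem N a b (Send q) (own, v) = (own(q := \<not> own q), v)"

definition run_protocol :: "nat \<Rightarrow> (nat \<Rightarrow> bool) \<Rightarrow> cstep list \<Rightarrow> (nat \<Rightarrow> bool) \<Rightarrow> (nat \<Rightarrow> bool)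
    \<Rightarrow> (nat \<Rightarrow> bool) \<times> (nat set \<Rightarrow> complex)" where
  "run_protocol N own0 steps a b = fold (cstep_sem N a b) steps (own0, ket {})"

text \<open>Ownership evolves independently of the inputs; each local step must be unitary on the
  qubits owned by the acting party (for every possible input of that party).\<close>

fun valid_steps :: "nat \<Rightarrow> (nat \<Rightarrow> bool) set \<Rightarrow> (nat \<Rightarrow> bool) set \<Rightarrow> (nat \<Rightarrow> bool) \<Rightarrow> cstep list \<Rightarrow> bool" where
  "valid_steps N XA XB own [] = True"
| "valid_steps N XA XB own (Local p M # st) =
     ((\<forall>inp\<in>(if p then XB else XA). unitary_on (Pow (owned N own p)) (M inp)) \<and>
      valid_steps N XA XB own st)"
| "valid_steps N XA XB own (Send q # st) = (q < N \<and> valid_steps N XA XB (own(q := \<not> own q)) st)"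

fun comm_cost :: "cstep list \<Rightarrow> nat" where
  "comm_cost [] = 0"
| "comm_cost (Local p M # st) = comm_cost st"
| "comm_cost (Send q # st) = Suc (comm_cost st)"

definition UQC_computes :: "nat \<Rightarrow> ((nat \<Rightarrow> bool) \<Rightarrow> (nat \<Rightarrow> bool) \<Rightarrow> bool) \<Rightarrow> nat \<Rightarrow> bool" where
  "UQC_computes n g c \<longleftrightarrow>
     (\<exists>N own0 steps qo. qo < N \<and> valid_steps N (bits n) (bits n) own0 steps \<and> comm_cost steps = c \<and>
        (\<forall>a\<in>bits n. \<forall>b\<in>bits n.
           (\<Sum>z\<in>{z\<in>Pow {0..<N}. (qo \<in> z) = g a b}. (cmod (snd (run_protocol N own0 steps a b) z))\<^sup>2) > 1/2))"

definition UQC :: "nat \<Rightarrow> ((nat \<Rightarrow> bool) \<Rightarrow> (nat \<Rightarrow> bool) \<Rightarrow> bool) \<Rightarrow> nat" where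
  "UQC n g = (LEAST c. UQC_computes n g c)"

end

theory Submission
  imports Defs
begin

text \<open>
  One query suffices for \<open>OMB\<^sub>n\<close>: prepare a state in which index \<open>i\<close> carries weight \<open>2\<^sup>i\<close>
  and query once; the bit \<open>x\<^sub>i = 1\<close> then shifts the output bias by \<open>\<plusminus>2\<^sup>i\<^sup>+\<^sup>1\<close> with sign
  given by the parity of \<open>i\<close>, so the largest such \<open>i\<close> outweighs all smaller ones together.
  Zero queries are impossible since the output distribution would not depend on \<open>x\<close>.

  For the lower bound, after a protocol exchanging \<open>c\<close> qubits the global state is a sum of
  \<open>2\<^sup>c\<close> products of an Alice part (depending on \<open>a\<close>) and a Bob part (depending on \<open>b\<close>).
  Hence the bias \<open>Pr[1] - Pr[0]\<close> is a real bilinear form \<open>\<langle>\<phi>(a), \<psi>(b)\<rangle>\<close> in dimension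
  \<open>2\<^sup>2\<^sup>c\<^sup>+\<^sup>1\<close> whose sign is \<open>DOMB\<^sub>n(a,b)\<close>.  Restricted to suitable inputs, \<open>DOMB\<^sub>n\<close>
  realises every sign pattern on \<open>n div 2\<close> fixed vectors \<open>\<psi>(b\<^sub>j)\<close>; these must then be linearly
  independent, so \<open>n div 2 \<le> 2\<^sup>2\<^sup>c\<^sup>+\<^sup>1\<close>.  The minimum defining \<open>UQC\<close> exists because
  Alice can simply send all of \<open>a\<close>.
\<close>

lemma sum_Pow_split:
  assumes "finite U" "S \<subseteq> U"
  shows "(\<Sum>z\<in>Pow U. h z) = (\<Sum>t\<in>Pow (U - S). \<Sum>s\<in>Pow S. h (t \<union> s))"
proof -
  have "(\<Sum>t\<in>Pow (U - S). \<Sum>s\<in>Pow S. h (t \<union> s)) = (\<Sum>p\<in>Pow (U - S) \<times> Pow S. h (fst p \<union> snd p))"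
    by (simp add: sum.cartesian_product split_def)
  also have "\<dots> = (\<Sum>z\<in>Pow U. h z)"
    by (rule sum.reindex_bij_witness[where i="\<lambda>z. (z - S, z \<inter> S)" and j="\<lambda>p. fst p \<union> snd p"])
       (use assms in auto)
  finally show ?thesis by simp
qed

lemma sum_signed_eq:
  fixes w :: "'a \<Rightarrow> real"
  assumes "finite S"
  shows "(\<Sum>z\<in>S. (if P z then 1 else -1) * w z) = 2 * (\<Sum>z\<in>{z\<in>S. P z}. w z) - (\<Sum>z\<in>S. w z)"
proof -
  have "(\<Sum>z\<in>S. (if P z then 1 else -1) * w z) = (\<Sum>z\<in>S. 2 * (if P z then w z else 0) - w z)"
    by (rule sum.cong) auto
  then show ?thesis
    using assms by (simp add: sum_subtractf sum_distrib_left[symmetric] sum.inter_filter)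
qed

lemma prob_gt_half_iff_bias:
  fixes w :: "'a \<Rightarrow> real"
  assumes "finite S" and "(\<Sum>z\<in>S. w z) = 1"
  shows "(\<Sum>z\<in>{z\<in>S. P z = c}. w z) > 1/2 \<longleftrightarrow>
         (if c then 1 else -1) * (\<Sum>z\<in>S. (if P z then 1 else -1) * w z) > 0"
proof -
  have "(\<Sum>z\<in>S. (if P z = c then 1 else -1) * w z)
      = (if c then 1 else -1) * (\<Sum>z\<in>S. (if P z then 1 else -1) * w z)"
    by (cases c) (auto simp: sum_distrib_left intro!: sum.cong)
  then show ?thesis
    using sum_signed_eq[OF assms(1), of "\<lambda>z. P z = c" w] assms(2) by linarith
qed

lemma apply_on_norm:
  assumes "finite S" and "unitary_on S U"
  shows "(\<Sum>s\<in>S. (cmod (apply_on S U v s))\<^sup>2) = (\<Sum>s\<in>S. (cmod (v s))\<^sup>2)"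
proof -
  have orth: "\<forall>i\<in>S. \<forall>j\<in>S. (\<Sum>k\<in>S. cnj (U k i) * U k j) = (if i = j then 1 else 0)"
    using assms(2) by (simp add: unitary_on_def)
  have sq: "complex_of_real ((cmod w)\<^sup>2) = w * cnj w" for w
    by (rule complex_norm_square)
  have "complex_of_real (\<Sum>s\<in>S. (cmod (apply_on S U v s))\<^sup>2)
      = (\<Sum>s\<in>S. (\<Sum>j\<in>S. U s j * v j) * cnj (\<Sum>k\<in>S. U s k * v k))"
    by (simp only: of_real_sum sq apply_on_def)
  also have "\<dots> = (\<Sum>s\<in>S. \<Sum>k\<in>S. \<Sum>j\<in>S. (U s j * v j) * (cnj (U s k) * cnj (v k)))"
    by (simp add: sum_distrib_left sum_distrib_right cnj_sum)
  also have "\<dots> = (\<Sum>s\<in>S. \<Sum>j\<in>S. \<Sum>k\<in>S. (U s j * v j) * (cnj (U s k) * cnj (v k)))"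
    by (rule sum.cong[OF refl], rule sum.swap)
  also have "\<dots> = (\<Sum>j\<in>S. \<Sum>k\<in>S. \<Sum>s\<in>S. (U s j * v j) * (cnj (U s k) * cnj (v k)))"
    by (subst sum.swap, rule sum.cong[OF refl], rule sum.swap)
  also have "\<dots> = (\<Sum>j\<in>S. \<Sum>k\<in>S. v j * cnj (v k) * (\<Sum>s\<in>S. cnj (U s k) * U s j))"
    by (simp add: sum_distrib_left mult_ac)
  also have "\<dots> = (\<Sum>j\<in>S. \<Sum>k\<in>S. if k = j then v j * cnj (v k) else 0)"
    using orth by (intro sum.cong refl) auto
  also have "\<dots> = (\<Sum>j\<in>S. v j * cnj (v j))"
    using assms(1) by (simp add: sum.delta)
  also have "\<dots> = complex_of_real (\<Sum>j\<in>S. (cmod (v j))\<^sup>2)"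
    by (simp only: of_real_sum sq)
  finally show ?thesis
    using of_real_eq_iff by blast
qed

lemma apply_on_ket:
  assumes "finite S" and "e \<in> S"
  shows "apply_on S U (ket e) s = U s e"
  using assms by (simp add: apply_on_def ket_def if_distrib[of "\<lambda>c. _ * c"] sum.delta' cong: if_cong)

definition perm_matrix :: "('a \<Rightarrow> 'a) \<Rightarrow> 'a \<Rightarrow> 'a \<Rightarrow> complex" where
  "perm_matrix \<pi> s y = (if s = \<pi> y then 1 else 0)"

lemma unitary_on_perm_matrix:
  assumes inv: "\<forall>y\<in>S. \<pi> y \<in> S \<and> \<pi> (\<pi> y) = y" and "finite S"
  shows "unitary_on S (perm_matrix \<pi>)"
  unfolding unitary_on_def
proof (intro conjI ballI)
  fix i j assume i: "i \<in> S" and j: "j \<in> S"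
  have swap: "k \<in> S \<Longrightarrow> (i = \<pi> k) = (k = \<pi> i)" for k
    using inv i by metis
  have "(\<Sum>k\<in>S. perm_matrix \<pi> i k * cnj (perm_matrix \<pi> j k))
      = (\<Sum>k\<in>S. if k = \<pi> i then (if j = \<pi> k then 1 else 0) else 0)"
    by (rule sum.cong) (auto simp: perm_matrix_def swap)
  also have "\<dots> = (if i = j then 1 else 0)"
    using inv i \<open>finite S\<close> by (auto simp: sum.delta)
  finally show "(\<Sum>k\<in>S. perm_matrix \<pi> i k * cnj (perm_matrix \<pi> j k)) = (if i = j then 1 else 0)" .
  have "(\<Sum>k\<in>S. cnj (perm_matrix \<pi> k i) * perm_matrix \<pi> k j)
      = (\<Sum>k\<in>S. if k = \<pi> i then (if k = \<pi> j then 1 else 0) else 0)"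
    by (rule sum.cong) (auto simp: perm_matrix_def)
  also have "\<dots> = (if i = j then 1 else 0)"
    using inv i j \<open>finite S\<close> by (simp add: sum.delta) metis
  finally show "(\<Sum>k\<in>S. cnj (perm_matrix \<pi> k i) * perm_matrix \<pi> k j) = (if i = j then 1 else 0)" .
qed

lemma apply_on_perm_matrix_id:
  assumes "finite S" and "s \<in> S"
  shows "apply_on S (perm_matrix id) v s = v s"
  using assms by (simp add: apply_on_def perm_matrix_def if_distrib[of "\<lambda>c. c * _"] sum.delta cong: if_cong)

lemma reflection_matrix_orthogonal:
  fixes u :: "'a \<Rightarrow> real"
  assumes "finite S" and "i \<in> S" and "j \<in> S" and d: "(\<Sum>s\<in>S. (u s)\<^sup>2) = d" "d \<noteq> 0"
  shows "(\<Sum>k\<in>S. ((if i = k then 1 else 0) - 2 * u i * u k / d) * ((if j = k then 1 else 0) - 2 * u j * u k / d))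
       = (if i = j then 1 else 0)"
proof -
  have "(\<Sum>k\<in>S. ((if i = k then 1 else 0) - 2 * u i * u k / d) * ((if j = k then 1 else 0) - 2 * u j * u k / d))
      = (\<Sum>k\<in>S. (if i = k then (if j = k then 1 else 0) else 0) - (if i = k then 2 * u j * u k / d else 0)
             - (if j = k then 2 * u i * u k / d else 0) + (4 * u i * u j / d ^ 2) * (u k)\<^sup>2)"
    by (rule sum.cong) (auto simp: power2_eq_square algebra_simps)
  also have "\<dots> = (if i = j then 1 else 0) - 2 * u j * u i / d - 2 * u i * u j / d + (4 * u i * u j / d ^ 2) * d"
  proof -
    have "(\<Sum>k\<in>S. (4 * u i * u j / d ^ 2) * (u k)\<^sup>2) = (4 * u i * u j / d ^ 2) * d"
      by (simp only: sum_distrib_left[symmetric] d(1))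
    then show ?thesis
      using assms(1-3) by (simp only: sum.distrib sum_subtractf) (simp add: sum.delta)
  qed
  also have "\<dots> = (if i = j then 1 else 0)"
    using d(2) by (simp add: power2_eq_square field_simps)
  finally show ?thesis .
qed

lemma householder_reflection:
  fixes S :: "'a set" and v :: "'a \<Rightarrow> real"
  assumes fS: "finite S" and e: "e \<in> S" and nv: "(\<Sum>s\<in>S. (v s)\<^sup>2) = 1" and ve: "v e \<noteq> 1"
  defines "u \<equiv> \<lambda>s. (if s = e then 1 else 0) - v s"
  defines "H \<equiv> \<lambda>i j. complex_of_real ((if i = j then 1 else 0) - 2 * u i * u j / (\<Sum>s\<in>S. (u s)\<^sup>2))"
  shows "unitary_on S H" and "\<forall>s\<in>S. H s e = complex_of_real (v s)"
proof -
  have "(\<Sum>s\<in>S. (u s)\<^sup>2) = (\<Sum>s\<in>S. (if s = e then 1 else 0) - 2 * (if s = e then v s else 0) + (v s)\<^sup>2)"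
    unfolding u_def by (rule sum.cong) (auto simp: power2_eq_square algebra_simps)
  also have "\<dots> = 2 * u e"
    using fS e nv by (simp add: sum.distrib sum_subtractf sum.delta' sum_distrib_left[symmetric] u_def)
  finally have denom: "(\<Sum>s\<in>S. (u s)\<^sup>2) = 2 * u e" .
  have ue: "u e \<noteq> 0"
    using ve by (simp add: u_def)
  define h where "h i j = (if i = j then 1 else 0) - 2 * u i * u j / (2 * u e)" for i j
  have H_h: "H i j = complex_of_real (h i j)" for i j
    by (simp add: H_def h_def denom)
  have orth: "(\<Sum>k\<in>S. h i k * h j k) = (if i = j then 1 else 0)" if "i \<in> S" "j \<in> S" for i j
    unfolding h_def using reflection_matrix_orthogonal[OF fS that denom] ue by simp
  have h_sym: "h i j = h j i" for i j
    by (simp add: h_def mult_ac)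
  show "unitary_on S H"
    unfolding unitary_on_def H_h using orth h_sym by (simp flip: of_real_sum of_real_mult)
  show "\<forall>s\<in>S. H s e = complex_of_real (v s)"
  proof
    fix s
    have "2 * u s * u e / (2 * u e) = u s"
      using ue by simp
    then show "H s e = complex_of_real (v s)"
      unfolding H_h h_def by (simp add: u_def)
  qed
qed


lemma owned_subset: "owned N own p \<subseteq> {0..<N}"
  by (auto simp: owned_def)

lemma owned_Not: "owned N (\<lambda>q. \<not> own q) p = owned N own (\<not> p)"
  by (auto simp: owned_def)

lemma local_op_eq:
  assumes "S \<subseteq> {0..<N}" and "z \<subseteq> {0..<N}"
  shows "local_op N S M v z = (\<Sum>y\<in>Pow S. M (z \<inter> S) y * v ((z - S) \<union> y))"
proof -
  have "local_op N S M v z = (\<Sum>t\<in>Pow ({0..<N} - S). \<Sum>s\<in>Pow S.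
      (if z - S = (t \<union> s) - S then M (z \<inter> S) ((t \<union> s) \<inter> S) else 0) * v (t \<union> s))"
    unfolding local_op_def by (rule sum_Pow_split) (use assms in auto)
  also have "\<dots> = (\<Sum>t\<in>Pow ({0..<N} - S). if z - S = t then (\<Sum>s\<in>Pow S. M (z \<inter> S) s * v (t \<union> s)) else 0)"
  proof (rule sum.cong[OF refl])
    fix t assume "t \<in> Pow ({0..<N} - S)"
    then have "(t \<union> s) - S = t" "(t \<union> s) \<inter> S = s" if "s \<in> Pow S" for s
      using that by auto
    then show "(\<Sum>s\<in>Pow S. (if z - S = (t \<union> s) - S then M (z \<inter> S) ((t \<union> s) \<inter> S) else 0) * v (t \<union> s))
      = (if z - S = t then \<Sum>s\<in>Pow S. M (z \<inter> S) s * v (t \<union> s) else 0)"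
      by (auto intro: sum.neutral)
  qed
  also have "\<dots> = (\<Sum>s\<in>Pow S. M (z \<inter> S) s * v ((z - S) \<union> s))"
    using assms by (subst sum.delta') auto
  finally show ?thesis .
qed

lemma local_op_norm:
  assumes S: "S \<subseteq> {0..<N}" and U: "unitary_on (Pow S) M"
  shows "(\<Sum>z\<in>Pow {0..<N}. (cmod (local_op N S M v z))\<^sup>2) = (\<Sum>z\<in>Pow {0..<N}. (cmod (v z))\<^sup>2)"
proof -
  have fS: "finite (Pow S)"
    using S finite_subset by blast
  have "(\<Sum>z\<in>Pow {0..<N}. (cmod (local_op N S M v z))\<^sup>2)
     = (\<Sum>t\<in>Pow ({0..<N} - S). \<Sum>s\<in>Pow S. (cmod (local_op N S M v (t \<union> s)))\<^sup>2)"
    by (rule sum_Pow_split) (use S in auto)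
  also have "\<dots> = (\<Sum>t\<in>Pow ({0..<N} - S). \<Sum>s\<in>Pow S. (cmod (apply_on (Pow S) M (\<lambda>y. v (t \<union> y)) s))\<^sup>2)"
  proof (intro sum.cong refl)
    fix t s assume ts: "t \<in> Pow ({0..<N} - S)" "s \<in> Pow S"
    then have "t \<union> s \<subseteq> {0..<N}" "(t \<union> s) \<inter> S = s" "(t \<union> s) - S = t"
      using S by auto
    then show "(cmod (local_op N S M v (t \<union> s)))\<^sup>2 = (cmod (apply_on (Pow S) M (\<lambda>y. v (t \<union> y)) s))\<^sup>2"
      using local_op_eq[OF S, of "t \<union> s" M v] by (simp add: apply_on_def)
  qed
  also have "\<dots> = (\<Sum>t\<in>Pow ({0..<N} - S). \<Sum>s\<in>Pow S. (cmod (v (t \<union> s)))\<^sup>2)"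
    by (intro sum.cong refl apply_on_norm fS U)
  also have "\<dots> = (\<Sum>z\<in>Pow {0..<N}. (cmod (v z))\<^sup>2)"
    by (rule sum_Pow_split[symmetric]) (use S in auto)
  finally show ?thesis .
qed

lemma local_op_perm_matrix_ket:
  assumes "S \<subseteq> {0..<N}" and "z0 \<subseteq> {0..<N}" and "\<pi> (z0 \<inter> S) \<subseteq> S"
  shows "local_op N S (perm_matrix \<pi>) (ket z0) = ket ((z0 - S) \<union> \<pi> (z0 \<inter> S))"
proof
  fix z
  have "local_op N S (perm_matrix \<pi>) (ket z0) z =
     (\<Sum>z'\<in>Pow {0..<N}. if z' = z0 then (if z - S = z' - S then perm_matrix \<pi> (z \<inter> S) (z' \<inter> S) else 0) else 0)"
    unfolding local_op_def by (rule sum.cong) (simp_all add: ket_def)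
  also have "\<dots> = (if z - S = z0 - S \<and> z \<inter> S = \<pi> (z0 \<inter> S) then 1 else 0)"
    using assms(2) by (simp add: sum.delta perm_matrix_def)
  also have "(z - S = z0 - S \<and> z \<inter> S = \<pi> (z0 \<inter> S)) = (z = (z0 - S) \<union> \<pi> (z0 \<inter> S))"
    using assms(3) by blast
  finally show "local_op N S (perm_matrix \<pi>) (ket z0) z = ket ((z0 - S) \<union> \<pi> (z0 \<inter> S)) z"
    by (simp add: ket_def)
qed

lemma run_norm_preserving:
  assumes "valid_steps N X Y own st" and "a \<in> X" and "b \<in> Y"
  shows "(\<Sum>z\<in>Pow {0..<N}. (cmod (snd (fold (cstep_sem N a b) st (own, v)) z))\<^sup>2)
       = (\<Sum>z\<in>Pow {0..<N}. (cmod (v z))\<^sup>2)"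
  using assms(1)
proof (induction st arbitrary: own v)
  case (Cons s st)
  show ?case
  proof (cases s)
    case (Local p M)
    have "unitary_on (Pow (owned N own p)) (M (if p then b else a))"
      using Cons.prems Local assms(2,3) by (cases p) auto
    then show ?thesis
      using Cons Local by (simp add: local_op_norm[OF owned_subset])
  next
    case (Send q)
    then show ?thesis
      using Cons.IH[of "own(q := \<not> own q)"] Cons.prems by (simp add: fun_upd_def)
  qed
qed simp

section \<open>Product decompositions of protocol states\<close>

definition bitstrings :: "nat \<Rightarrow> bool list set" where
  "bitstrings j = {xs. length xs = j}"

lemma card_bitstrings: "card (bitstrings j) = 2 ^ j" and finite_bitstrings: "finite (bitstrings j)"
  unfolding bitstrings_def
  using card_lists_length_eq[of "UNIV::bool set" j] finite_lists_length_eq[of "UNIV::bool set" j] by simp_all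

lemma sum_bitstrings_Suc:
  "(\<Sum>xs\<in>bitstrings (Suc j). f xs) = (\<Sum>ys\<in>bitstrings j. f (True # ys)) + (\<Sum>ys\<in>bitstrings j. f (False # ys))"
proof -
  have "bitstrings (Suc j) = Cons True ` bitstrings j \<union> Cons False ` bitstrings j"
    unfolding bitstrings_def by (auto simp: length_Suc_conv)
  then have "(\<Sum>xs\<in>bitstrings (Suc j). f xs)
      = (\<Sum>xs\<in>Cons True ` bitstrings j. f xs) + (\<Sum>xs\<in>Cons False ` bitstrings j. f xs)"
    by (simp only:) (rule sum.union_disjoint; auto simp: finite_bitstrings)
  then show ?thesis
    by (simp add: sum.reindex)
qed

definition product_decomp :: "'a set \<Rightarrow> 'b set \<Rightarrow> nat \<Rightarrow> (nat \<Rightarrow> bool) \<Rightarrow> nat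
    \<Rightarrow> ('a \<Rightarrow> 'b \<Rightarrow> nat set \<Rightarrow> complex) \<Rightarrow> bool" where
  "product_decomp X Y N own j V \<longleftrightarrow> (\<exists>F G. \<forall>a\<in>X. \<forall>b\<in>Y. \<forall>z\<in>Pow {0..<N}.
     V a b z = (\<Sum>xs\<in>bitstrings j. F a xs (z \<inter> owned N own False) * G b xs (z \<inter> owned N own True)))"

lemma product_decomp_swap:
  assumes "product_decomp X Y N own j V"
  shows "product_decomp Y X N (\<lambda>q. \<not> own q) j (\<lambda>b a. V a b)"
proof -
  obtain F G where "\<forall>a\<in>X. \<forall>b\<in>Y. \<forall>z\<in>Pow {0..<N}.
     V a b z = (\<Sum>xs\<in>bitstrings j. F a xs (z \<inter> owned N own False) * G b xs (z \<inter> owned N own True))"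
    using assms unfolding product_decomp_def by blast
  then show ?thesis
    unfolding product_decomp_def owned_Not by (intro exI[of _ G] exI[of _ F]) (simp add: mult.commute)
qed

lemma product_decomp_local_Alice:
  assumes "product_decomp X Y N own j V"
  shows "product_decomp X Y N own j (\<lambda>a b. local_op N (owned N own False) (M a) (V a b))"
proof -
  let ?A = "owned N own False" and ?B = "owned N own True"
  obtain F G where FG: "\<forall>a\<in>X. \<forall>b\<in>Y. \<forall>z\<in>Pow {0..<N}.
     V a b z = (\<Sum>xs\<in>bitstrings j. F a xs (z \<inter> ?A) * G b xs (z \<inter> ?B))"
    using assms unfolding product_decomp_def by blast
  define F' where "F' a xs s = (\<Sum>y\<in>Pow ?A. M a s y * F a xs y)" for a xs s
  have "local_op N ?A (M a) (V a b) z = (\<Sum>xs\<in>bitstrings j. F' a xs (z \<inter> ?A) * G b xs (z \<inter> ?B))"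
    if ab: "a \<in> X" "b \<in> Y" and z: "z \<in> Pow {0..<N}" for a b z
  proof -
    have "local_op N ?A (M a) (V a b) z = (\<Sum>y\<in>Pow ?A. M a (z \<inter> ?A) y * V a b ((z - ?A) \<union> y))"
      by (rule local_op_eq) (use z owned_subset in auto)
    also have "\<dots> = (\<Sum>y\<in>Pow ?A. M a (z \<inter> ?A) y * (\<Sum>xs\<in>bitstrings j. F a xs y * G b xs (z \<inter> ?B)))"
    proof (rule sum.cong[OF refl])
      fix y assume y: "y \<in> Pow ?A"
      then have "(z - ?A) \<union> y \<in> Pow {0..<N}" "((z - ?A) \<union> y) \<inter> ?A = y" "((z - ?A) \<union> y) \<inter> ?B = z \<inter> ?B"
        using z owned_subset by (auto simp: owned_def)
      then show "M a (z \<inter> ?A) y * V a b ((z - ?A) \<union> y) = M a (z \<inter> ?A) y * (\<Sum>xs\<in>bitstrings j. F a xs y * G b xs (z \<inter> ?B))"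
        using FG ab by simp
    qed
    also have "\<dots> = (\<Sum>xs\<in>bitstrings j. F' a xs (z \<inter> ?A) * G b xs (z \<inter> ?B))"
      by (simp add: F'_def sum_distrib_left sum_distrib_right mult_ac sum.swap[of _ "Pow ?A"])
    finally show ?thesis .
  qed
  then show ?thesis
    unfolding product_decomp_def by blast
qed

lemma product_decomp_local_Bob:
  assumes "product_decomp X Y N own j V"
  shows "product_decomp X Y N own j (\<lambda>a b. local_op N (owned N own True) (M b) (V a b))"
  using product_decomp_swap[OF product_decomp_local_Alice[OF product_decomp_swap[OF assms], of M]]
  by (simp add: owned_Not)

lemma product_decomp_send_Alice:
  assumes d: "product_decomp X Y N own j V" and q: "q < N" and Alice: "\<not> own q"
  shows "product_decomp X Y N (own(q := True)) (Suc j) V"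
proof -
  let ?A = "owned N own False" and ?B = "owned N own True"
  let ?A' = "owned N (own(q := True)) False" and ?B' = "owned N (own(q := True)) True"
  obtain F G where FG: "\<forall>a\<in>X. \<forall>b\<in>Y. \<forall>z\<in>Pow {0..<N}.
     V a b z = (\<Sum>xs\<in>bitstrings j. F a xs (z \<inter> ?A) * G b xs (z \<inter> ?B))"
    using d unfolding product_decomp_def by blast
  \<comment> \<open>the new leading bit records the value of the transmitted qubit \<open>q\<close>\<close>
  define F' where "F' a xs s = (case xs of [] \<Rightarrow> 0 | \<beta> # ys \<Rightarrow> F a ys (if \<beta> then insert q s else s))" for a xs s
  define G' where "G' b xs t = (case xs of [] \<Rightarrow> 0 | \<beta> # ys \<Rightarrow> (if (q \<in> t) = \<beta> then G b ys (t - {q}) else 0))" for b xs t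
  have "V a b z = (\<Sum>xs\<in>bitstrings (Suc j). F' a xs (z \<inter> ?A') * G' b xs (z \<inter> ?B'))"
    if ab: "a \<in> X" "b \<in> Y" and z: "z \<in> Pow {0..<N}" for a b z
  proof -
    have "(if q \<in> z then insert q (z \<inter> ?A') else z \<inter> ?A') = z \<inter> ?A"
      "(z \<inter> ?B') - {q} = z \<inter> ?B" "(q \<in> z \<inter> ?B') = (q \<in> z)"
      using Alice q by (auto simp: owned_def)
    then have "(\<Sum>xs\<in>bitstrings (Suc j). F' a xs (z \<inter> ?A') * G' b xs (z \<inter> ?B'))
        = (\<Sum>ys\<in>bitstrings j. F a ys (z \<inter> ?A) * G b ys (z \<inter> ?B))"
      unfolding sum_bitstrings_Suc by (cases "q \<in> z") (simp_all add: F'_def G'_def)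
    then show ?thesis
      using FG ab z by simp
  qed
  then show ?thesis
    unfolding product_decomp_def by blast
qed

lemma product_decomp_send:
  assumes "product_decomp X Y N own j V" and "q < N"
  shows "product_decomp X Y N (own(q := \<not> own q)) (Suc j) V"
proof (cases "own q")
  case True
  have "product_decomp Y X N ((\<lambda>q. \<not> own q)(q := True)) (Suc j) (\<lambda>b a. V a b)"
    using product_decomp_send_Alice[OF product_decomp_swap[OF assms(1)] assms(2)] True by simp
  moreover have "(\<lambda>x. \<not> ((\<lambda>q. \<not> own q)(q := True)) x) = own(q := \<not> own q)"
    using True by auto
  ultimately show ?thesis
    using product_decomp_swap by fastforce
next
  case False
  then show ?thesis
    using product_decomp_send_Alice[OF assms] by simp
qed

lemma product_decomp_run:
  assumes "product_decomp X Y N own j V" and "valid_steps N X Y own st"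
  shows "\<exists>own'. product_decomp X Y N own' (j + comm_cost st)
           (\<lambda>a b. snd (fold (cstep_sem N a b) st (own, V a b)))"
  using assms
proof (induction st arbitrary: own j V)
  case (Cons s st)
  show ?case
  proof (cases s)
    case (Local p M)
    have "product_decomp X Y N own j (\<lambda>a b. local_op N (owned N own p) (M (if p then b else a)) (V a b))"
      using product_decomp_local_Alice[OF Cons.prems(1)] product_decomp_local_Bob[OF Cons.prems(1)]
      by (cases p) simp_all
    then show ?thesis
      using Cons.IH Cons.prems(2) Local by simp
  next
    case (Send q)
    then have "product_decomp X Y N (own(q := \<not> own q)) (Suc j) V"
      using Cons.prems product_decomp_send[OF Cons.prems(1)] by simp
    then show ?thesis
      using Cons.IH Cons.prems(2) Send by fastforce
  qed
qed auto


section \<open>The output bias as a bilinear form\<close>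

lemma sum_weighted_sq_of_product_sum:
  fixes F :: "'k \<Rightarrow> 's \<Rightarrow> complex" and G :: "'k \<Rightarrow> 't \<Rightarrow> complex"
  shows "(\<Sum>t\<in>B. \<Sum>s\<in>A. of_real (\<alpha> s * \<beta> t) * ((\<Sum>x\<in>K. F x s * G x t) * cnj (\<Sum>x\<in>K. F x s * G x t)))
       = (\<Sum>p\<in>K \<times> K. (\<Sum>s\<in>A. of_real (\<alpha> s) * (F (fst p) s * cnj (F (snd p) s)))
                      * (\<Sum>t\<in>B. of_real (\<beta> t) * (G (fst p) t * cnj (G (snd p) t))))"
proof -
  define summand where "summand p s t = of_real (\<alpha> s) * (F (fst p) s * cnj (F (snd p) s))
            * (of_real (\<beta> t) * (G (fst p) t * cnj (G (snd p) t)))" for p s t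
  have sq: "(\<Sum>x\<in>K. F x s * G x t) * cnj (\<Sum>x\<in>K. F x s * G x t)
      = (\<Sum>p\<in>K \<times> K. (F (fst p) s * cnj (F (snd p) s)) * (G (fst p) t * cnj (G (snd p) t)))" for s t
    by (simp add: cnj_sum sum_product sum.cartesian_product split_def mult_ac)
  have "(\<Sum>t\<in>B. \<Sum>s\<in>A. of_real (\<alpha> s * \<beta> t) * ((\<Sum>x\<in>K. F x s * G x t) * cnj (\<Sum>x\<in>K. F x s * G x t)))
      = (\<Sum>t\<in>B. \<Sum>s\<in>A. \<Sum>p\<in>K \<times> K. summand p s t)"
    unfolding sq summand_def by (simp add: sum_distrib_left mult_ac)
  also have "\<dots> = (\<Sum>t\<in>B. \<Sum>p\<in>K \<times> K. \<Sum>s\<in>A. summand p s t)"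
    by (rule sum.cong[OF refl], rule sum.swap)
  also have "\<dots> = (\<Sum>p\<in>K \<times> K. \<Sum>t\<in>B. \<Sum>s\<in>A. summand p s t)"
    by (rule sum.swap)
  also have "\<dots> = (\<Sum>p\<in>K \<times> K. \<Sum>s\<in>A. \<Sum>t\<in>B. summand p s t)"
    by (rule sum.cong[OF refl], rule sum.swap)
  also have "\<dots> = (\<Sum>p\<in>K \<times> K. (\<Sum>s\<in>A. of_real (\<alpha> s) * (F (fst p) s * cnj (F (snd p) s)))
                      * (\<Sum>t\<in>B. of_real (\<beta> t) * (G (fst p) t * cnj (G (snd p) t))))"
    unfolding summand_def by (simp only: sum_product)
  finally show ?thesis .
qed

lemma Re_sum_mult_eq_real_sum:
  "Re (\<Sum>p\<in>P. x p * y p) =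
     (\<Sum>i\<in>P \<times> (UNIV :: bool set). (if snd i then Re (x (fst i)) else Im (x (fst i)))
                                 * (if snd i then Re (y (fst i)) else - Im (y (fst i))))"
proof -
  have pairs: "(\<Sum>i\<in>P \<times> UNIV. f i) = (\<Sum>p\<in>P. \<Sum>\<beta>\<in>UNIV. f (p, \<beta>))" for f :: "_ \<Rightarrow> real"
    by (simp add: sum.cartesian_product)
  show ?thesis
    by (simp only: pairs) (simp add: Re_sum UNIV_bool)
qed

definition bias_index :: "nat \<Rightarrow> ((bool list \<times> bool list) \<times> bool) set" where
  "bias_index j = (bitstrings j \<times> bitstrings j) \<times> UNIV"

lemma finite_bias_index: "finite (bias_index j)"
  and card_bias_index: "card (bias_index j) = 2 ^ (2 * j + 1)"
  by (simp_all add: bias_index_def finite_bitstrings card_cartesian_product card_bitstrings power_add mult_2)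

lemma product_decomp_bias_bilinear:
  assumes d: "product_decomp X Y N own j V" and qo: "qo < N"
  shows "\<exists>\<phi> \<psi>. \<forall>a\<in>X. \<forall>b\<in>Y.
     (\<Sum>z\<in>Pow {0..<N}. (if qo \<in> z then 1 else -1) * (cmod (V a b z))\<^sup>2)
       = (\<Sum>i\<in>bias_index j. \<phi> a i * \<psi> b i)"
proof -
  let ?A = "owned N own False" and ?B = "owned N own True"
  obtain F G where FG: "\<forall>a\<in>X. \<forall>b\<in>Y. \<forall>z\<in>Pow {0..<N}.
     V a b z = (\<Sum>xs\<in>bitstrings j. F a xs (z \<inter> ?A) * G b xs (z \<inter> ?B))"
    using d unfolding product_decomp_def by blast
  \<comment> \<open>the sign of a basis state is determined by whichever party owns the output qubit\<close>
  define sA :: "nat set \<Rightarrow> real" where "sA s = (if qo \<in> ?A \<and> qo \<notin> s then -1 else 1)" for s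
  define sB :: "nat set \<Rightarrow> real" where "sB t = (if qo \<in> ?B \<and> qo \<notin> t then -1 else 1)" for t
  define alice where "alice a p = (\<Sum>s\<in>Pow ?A. of_real (sA s) * (F a (fst p) s * cnj (F a (snd p) s)))" for a p
  define bob where "bob b p = (\<Sum>t\<in>Pow ?B. of_real (sB t) * (G b (fst p) t * cnj (G b (snd p) t)))" for b p
  have bias_complex: "complex_of_real (\<Sum>z\<in>Pow {0..<N}. (if qo \<in> z then 1 else -1) * (cmod (V a b z))\<^sup>2)
       = (\<Sum>p\<in>bitstrings j \<times> bitstrings j. alice a p * bob b p)" if ab: "a \<in> X" "b \<in> Y" for a b
  proof -
    have "complex_of_real (\<Sum>z\<in>Pow {0..<N}. (if qo \<in> z then 1 else -1) * (cmod (V a b z))\<^sup>2)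
        = (\<Sum>z\<in>Pow {0..<N}. of_real (if qo \<in> z then 1 else -1) * (V a b z * cnj (V a b z)))"
      by (simp only: of_real_sum of_real_mult complex_norm_square)
    also have "\<dots> = (\<Sum>t\<in>Pow ?B. \<Sum>s\<in>Pow ?A. of_real (if qo \<in> t \<union> s then 1 else -1)
                        * (V a b (t \<union> s) * cnj (V a b (t \<union> s))))"
    proof -
      have "{0..<N} - ?A = ?B"
        by (auto simp: owned_def)
      then show ?thesis
        by (subst sum_Pow_split[of "{0..<N}" ?A]) (simp_all add: owned_subset)
    qed
    also have "\<dots> = (\<Sum>t\<in>Pow ?B. \<Sum>s\<in>Pow ?A. of_real (sA s * sB t)
        * ((\<Sum>x\<in>bitstrings j. F a x s * G b x t) * cnj (\<Sum>x\<in>bitstrings j. F a x s * G b x t)))"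
    proof (intro sum.cong refl)
      fix t s assume ts: "t \<in> Pow ?B" "s \<in> Pow ?A"
      then have "t \<union> s \<in> Pow {0..<N}" "(t \<union> s) \<inter> ?A = s" "(t \<union> s) \<inter> ?B = t"
        using owned_subset by (auto simp: owned_def)
      moreover have "(if qo \<in> t \<union> s then 1 else -1) = sA s * sB t"
        using ts qo by (auto simp: sA_def sB_def owned_def)
      ultimately show "of_real (if qo \<in> t \<union> s then 1 else -1) * (V a b (t \<union> s) * cnj (V a b (t \<union> s)))
          = of_real (sA s * sB t) * ((\<Sum>x\<in>bitstrings j. F a x s * G b x t) * cnj (\<Sum>x\<in>bitstrings j. F a x s * G b x t))"
        using FG ab by simp
    qed
    also have "\<dots> = (\<Sum>p\<in>bitstrings j \<times> bitstrings j. alice a p * bob b p)"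
      unfolding alice_def bob_def by (rule sum_weighted_sq_of_product_sum)
    finally show ?thesis .
  qed
  define \<phi> where "\<phi> a i = (if snd i then Re (alice a (fst i)) else Im (alice a (fst i)))" for a i
  define \<psi> where "\<psi> b i = (if snd i then Re (bob b (fst i)) else - Im (bob b (fst i)))" for b i
  have "(\<Sum>z\<in>Pow {0..<N}. (if qo \<in> z then 1 else -1) * (cmod (V a b z))\<^sup>2)
       = (\<Sum>i\<in>bias_index j. \<phi> a i * \<psi> b i)" if "a \<in> X" "b \<in> Y" for a b
    using arg_cong[OF bias_complex[OF that], of Re] unfolding \<phi>_def \<psi>_def bias_index_def
    by (simp only: Re_complex_of_real Re_sum_mult_eq_real_sum)
  then show ?thesis
    by blast
qed

lemma UQC_computes_sign_bilinear:
  assumes "UQC_computes n g c"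
  shows "\<exists>\<phi> \<psi>. \<forall>a\<in>bits n. \<forall>b\<in>bits n.
     (g a b \<longrightarrow> (\<Sum>i\<in>bias_index c. \<phi> a i * \<psi> b i) > (0::real))
   \<and> (\<not> g a b \<longrightarrow> (\<Sum>i\<in>bias_index c. \<phi> a i * \<psi> b i) < 0)"
proof -
  obtain N own0 steps qo where qo: "qo < N" and vs: "valid_steps N (bits n) (bits n) own0 steps"
    and cost: "comm_cost steps = c"
    and acc: "\<forall>a\<in>bits n. \<forall>b\<in>bits n.
           (\<Sum>z\<in>{z\<in>Pow {0..<N}. (qo \<in> z) = g a b}. (cmod (snd (run_protocol N own0 steps a b) z))\<^sup>2) > 1/2"
    using assms unfolding UQC_computes_def by blast
  have "z \<inter> owned N own0 False \<union> z \<inter> owned N own0 True = z" if "z \<subseteq> {0..<N}" for z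
    using that by (auto simp: owned_def)
  then have "z = {} \<longleftrightarrow> z \<inter> owned N own0 False = {} \<and> z \<inter> owned N own0 True = {}" if "z \<subseteq> {0..<N}" for z
    using that by blast
  then have init: "product_decomp (bits n) (bits n) N own0 0 (\<lambda>_ _. ket {})"
    unfolding product_decomp_def bitstrings_def
    by (intro exI[of _ "\<lambda>_ _ s. ket {} s"] exI[of _ "\<lambda>_ _ s. ket {} s"]) (simp add: ket_def)
  have "\<exists>own. product_decomp (bits n) (bits n) N own c (\<lambda>a b. snd (run_protocol N own0 steps a b))"
    using product_decomp_run[OF init vs] cost by (simp add: run_protocol_def)
  then obtain own where "product_decomp (bits n) (bits n) N own c (\<lambda>a b. snd (run_protocol N own0 steps a b))"
    by blast
  from product_decomp_bias_bilinear[OF this qo] obtain \<phi> \<psi> where \<phi>\<psi>: "\<forall>a\<in>bits n. \<forall>b\<in>bits n.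
     (\<Sum>z\<in>Pow {0..<N}. (if qo \<in> z then 1 else -1) * (cmod (snd (run_protocol N own0 steps a b) z))\<^sup>2)
       = (\<Sum>i\<in>bias_index c. \<phi> a i * \<psi> b i)"
    by blast
  have bias: "(if g a b then 1 else -1) * (\<Sum>i\<in>bias_index c. \<phi> a i * \<psi> b i) > 0" if ab: "a \<in> bits n" "b \<in> bits n" for a b
  proof -
    have norm: "(\<Sum>z\<in>Pow {0..<N}. (cmod (snd (run_protocol N own0 steps a b) z))\<^sup>2) = 1"
      using run_norm_preserving[OF vs ab, of "ket {}"]
      by (simp add: run_protocol_def ket_def if_distrib[of "\<lambda>x. (cmod x)\<^sup>2"] sum.delta cong: if_cong)
    have "(if g a b then 1 else -1)
        * (\<Sum>z\<in>Pow {0..<N}. (if qo \<in> z then 1 else -1) * (cmod (snd (run_protocol N own0 steps a b) z))\<^sup>2) > 0"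
      using prob_gt_half_iff_bias[OF _ norm, of "\<lambda>z. qo \<in> z" "g a b"] acc ab by (simp only: finite_Pow_iff finite_atLeastLessThan simp_thms)
    then show ?thesis
      by (simp only: \<phi>\<psi>[rule_format, OF ab])
  qed
  show ?thesis
  proof (rule exI[of _ \<phi>], rule exI[of _ \<psi>], intro ballI)
    fix a b assume "a \<in> bits n" "b \<in> bits n"
    then show "(g a b \<longrightarrow> (\<Sum>i\<in>bias_index c. \<phi> a i * \<psi> b i) > 0) \<and> (\<not> g a b \<longrightarrow> (\<Sum>i\<in>bias_index c. \<phi> a i * \<psi> b i) < 0)"
      using bias[of a b] by (cases "g a b") simp_all
  qed
qed

section \<open>Sign patterns of inner products\<close>

lemma homogeneous_system_nontrivial_solution:
  fixes A :: "'i \<Rightarrow> 'k \<Rightarrow> real"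
  assumes "finite J" and "finite K" and "card J < card K"
  shows "\<exists>w. (\<exists>j\<in>K. w j \<noteq> 0) \<and> (\<forall>i\<in>J. (\<Sum>j\<in>K. w j * A i j) = 0)"
  using assms
proof (induction J arbitrary: K A rule: finite_induct)
  case empty
  then obtain j where "j \<in> K"
    by fastforce
  then show ?case
    by (intro exI[of _ "\<lambda>_. 1"]) auto
next
  case (insert i0 J)
  show ?case
  proof (cases "\<forall>j\<in>K. A i0 j = 0")
    case True
    then show ?thesis
      using insert.IH[of K A] insert.hyps insert.prems by auto
  next
    case False
    then obtain j0 where j0: "j0 \<in> K" "A i0 j0 \<noteq> 0"
      by blast
    \<comment> \<open>Gaussian elimination: clear column \<open>j0\<close> using row \<open>i0\<close>, solve the smaller system, then fix \<open>w j0\<close>\<close>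
    define A' where "A' i j = A i j - A i j0 * A i0 j / A i0 j0" for i j
    have "finite (K - {j0})" "card J < card (K - {j0})"
      using insert j0 by auto
    then obtain w' where w': "\<exists>j\<in>K - {j0}. w' j \<noteq> 0" "\<forall>i\<in>J. (\<Sum>j\<in>K - {j0}. w' j * A' i j) = 0"
      using insert.IH[of "K - {j0}" A'] by blast
    define w where "w j = (if j = j0 then - (\<Sum>j\<in>K - {j0}. w' j * A i0 j) / A i0 j0 else w' j)" for j
    have split: "(\<Sum>j\<in>K. w j * A i j) = w j0 * A i j0 + (\<Sum>j\<in>K - {j0}. w' j * A i j)" for i
      using insert.prems(1) j0(1) by (simp add: sum.remove w_def)
    have "(\<Sum>j\<in>K. w j * A i j) = 0" if "i \<in> insert i0 J" for i
    proof (cases "i = i0")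
      case True
      then show ?thesis
        using j0 unfolding split by (simp add: w_def)
    next
      case False
      have "(\<Sum>j\<in>K - {j0}. w' j * A' i j)
          = (\<Sum>j\<in>K - {j0}. w' j * A i j) - (A i j0 / A i0 j0) * (\<Sum>j\<in>K - {j0}. w' j * A i0 j)"
        by (simp add: A'_def sum_distrib_left sum_subtractf algebra_simps)
      then show ?thesis
        using w'(2) False that j0 unfolding split by (simp add: w_def)
    qed
    moreover have "\<exists>j\<in>K. w j \<noteq> 0"
      using w'(1) by (auto simp: w_def)
    ultimately show ?thesis
      by blast
  qed
qed

text \<open>A linear dependency \<open>w\<close> among the vectors \<open>\<psi> j\<close> is contradicted by the sign pattern
  \<open>T = {j. w j \<ge> 0}\<close>.\<close>

lemma sign_pattern_card_le:
  fixes \<phi> :: "nat set \<Rightarrow> 'i \<Rightarrow> real" and \<psi> :: "nat \<Rightarrow> 'i \<Rightarrow> real"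
  assumes J: "finite J"
    and pattern: "\<And>T j. T \<subseteq> {0..<s} \<Longrightarrow> j < s \<Longrightarrow>
       (j \<in> T \<longrightarrow> (\<Sum>i\<in>J. \<phi> T i * \<psi> j i) > 0) \<and> (j \<notin> T \<longrightarrow> (\<Sum>i\<in>J. \<phi> T i * \<psi> j i) < 0)"
  shows "s \<le> card J"
proof (rule ccontr)
  assume "\<not> s \<le> card J"
  then obtain w where w: "\<exists>j\<in>{0..<s}. w j \<noteq> 0" "\<forall>i\<in>J. (\<Sum>j\<in>{0..<s}. w j * \<psi> j i) = 0"
    using homogeneous_system_nontrivial_solution[OF J, of "{0..<s}" "\<lambda>i j. \<psi> j i"] by auto
  define T where "T = {j. j < s \<and> w j \<ge> 0}"
  define f where "f j = (\<Sum>i\<in>J. \<phi> T i * \<psi> j i)" for j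
  have "(\<Sum>j\<in>{0..<s}. w j * f j) = (\<Sum>i\<in>J. \<phi> T i * (\<Sum>j\<in>{0..<s}. w j * \<psi> j i))"
    unfolding f_def sum_distrib_left by (subst sum.swap) (simp add: mult_ac)
  also have "\<dots> = 0"
    using w(2) by simp
  finally have zero: "(\<Sum>j\<in>{0..<s}. w j * f j) = 0" .
  have T: "T \<subseteq> {0..<s}"
    by (auto simp: T_def)
  have sign: "(w j \<ge> 0 \<longrightarrow> f j > 0) \<and> (w j < 0 \<longrightarrow> f j < 0)" if "j < s" for j
    using pattern[OF T that] that unfolding f_def by (auto simp: T_def)
  have "0 \<le> w j * f j" if "j \<in> {0..<s}" for j
    using sign[of j] that by (cases "w j \<ge> 0") (auto intro: mult_nonneg_nonneg mult_nonpos_nonpos)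
  moreover obtain j0 where "j0 < s" "w j0 \<noteq> 0"
    using w(1) by auto
  moreover have "0 < w j0 * f j0" if "j0 < s" "w j0 \<noteq> 0"
    using sign[OF that(1)] that(2) by (cases "w j0 > 0") (auto simp: mult_neg_neg)
  ultimately have "0 < (\<Sum>j\<in>{0..<s}. w j * f j)"
    by (intro sum_pos2[of "{0..<s}" j0]) auto
  then show False
    using zero by simp
qed


lemma OMB_cong:
  assumes "\<And>i. i \<in> {1..n} \<Longrightarrow> x i = y i"
  shows "OMB n x = OMB n y"
proof -
  have "(\<lambda>i. i \<in> {1..n} \<and> x i) = (\<lambda>i. i \<in> {1..n} \<and> y i)" "(\<exists>i\<in>{1..n}. x i) = (\<exists>i\<in>{1..n}. y i)"
    using assms by auto
  then show ?thesis
    unfolding OMB_def by simp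
qed

lemma OMB_singleton:
  assumes "k \<in> {1..n}"
  shows "OMB n (\<lambda>i. i = k) = odd k"
proof -
  have "(GREATEST i. i \<in> {1..n} \<and> i = k) = k"
    using assms by (intro Greatest_equality) auto
  then show ?thesis
    using assms unfolding OMB_def by auto
qed

lemma OMB_Suc: "OMB (Suc m) x = (if x (Suc m) then odd (Suc m) else OMB m x)"
proof (cases "x (Suc m)")
  case True
  have "(GREATEST i. i \<in> {1..Suc m} \<and> x i) = Suc m"
    using True by (intro Greatest_equality) auto
  then show ?thesis
    using True unfolding OMB_def by auto
next
  case False
  then have "(\<lambda>i. i \<in> {1..Suc m} \<and> x i) = (\<lambda>i. i \<in> {1..m} \<and> x i)"
    "(\<exists>i\<in>{1..Suc m}. x i) = (\<exists>i\<in>{1..m}. x i)"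
    by (auto simp: le_Suc_eq)
  then show ?thesis
    using False unfolding OMB_def by simp
qed

definition signed_weight :: "nat \<Rightarrow> (nat \<Rightarrow> bool) \<Rightarrow> real" where
  "signed_weight m x = (\<Sum>i\<in>{1..m}. if x i then (if odd i then 1 else -1) * 2 ^ (i + 1) else 0)"

text \<open>The bound on \<open>\<bar>signed_weight\<bar>\<close> is what lets the highest set bit dominate in the induction step.\<close>

lemma signed_weight_bounds:
  "\<bar>signed_weight m x\<bar> \<le> 2 ^ (m + 2) - 4 \<and>
   ((\<exists>i\<in>{1..m}. x i) \<longrightarrow> (OMB m x \<longrightarrow> signed_weight m x \<ge> 4) \<and> (\<not> OMB m x \<longrightarrow> signed_weight m x \<le> -4)) \<and>
   (\<not> (\<exists>i\<in>{1..m}. x i) \<longrightarrow> signed_weight m x = 0 \<and> \<not> OMB m x)"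
proof (induction m)
  case 0
  then show ?case
    by (simp add: signed_weight_def OMB_def)
next
  case (Suc m)
  have ex: "(\<exists>i\<in>{1..Suc m}. x i) = (x (Suc m) \<or> (\<exists>i\<in>{1..m}. x i))"
    by (auto simp: le_Suc_eq) (metis atLeastAtMost_iff le_refl Suc_le_eq zero_less_Suc)
  have step: "signed_weight (Suc m) x
      = signed_weight m x + (if x (Suc m) then (if odd (Suc m) then 1 else -1) * 2 ^ (m + 2) else 0)"
    by (simp add: signed_weight_def)
  have "(2::real) ^ (Suc m + 2) = 2 * 2 ^ (m + 2)" "(4::real) \<le> 2 ^ (m + 2)"
    using power_increasing[of 2 "m + 2" "2::real"] by simp_all
  then show ?case
    using Suc.IH unfolding step OMB_Suc ex
    by (cases "x (Suc m)"; cases "odd (Suc m)") (auto simp: abs_le_iff)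
qed

lemma signed_weight_OMB:
  "(OMB m x \<longrightarrow> 4 \<le> signed_weight m x) \<and> (\<not> OMB m x \<longrightarrow> signed_weight m x \<le> 0)"
  using signed_weight_bounds[of m x] by auto

section \<open>One query suffices for OMB\<close>

lemma sum_QB_3:
  "(\<Sum>s\<in>QB n 3. g s) = (\<Sum>i\<in>{1..n}. g (i, False, 0) + g (i, False, 1) + g (i, False, 2)
                                     + g (i, True, 0) + g (i, True, 1) + g (i, True, 2))"
proof -
  have "(\<Sum>s\<in>QB n 3. g s) = (\<Sum>i\<in>{1..n}. \<Sum>b\<in>(UNIV::bool set). \<Sum>z\<in>{0..<3::nat}. g (i, b, z))"
    unfolding QB_def by (simp add: sum.cartesian_product split_def)
  then show ?thesis
    by (simp add: UNIV_bool numeral_3_eq_3 numeral_2_eq_2 atLeast0_lessThan_Suc algebra_simps)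
qed

lemma query_final_one_query:
  assumes "0 < n" and "0 < w" and s: "(i, b, z) \<in> QB n w"
  shows "query_final n w x U0 [perm_matrix id] (i, b, z) = U0 (i, b \<noteq> x i, z) (1, False, 0)"
proof -
  have "(i, b \<noteq> x i, z) \<in> QB n w" "(1, False, 0) \<in> QB n w"
    using assms by (auto simp: QB_def)
  then show ?thesis
    using s by (simp add: query_final_def apply_on_perm_matrix_id QB_def query_op_def apply_on_ket)
qed

text \<open>The one-query algorithm prepares the state with squared amplitudes \<open>OMB_weight\<close> and
  measures \<open>OMB_out\<close>.  Workspace values \<open>0\<close> and \<open>1\<close> carry weight \<open>2\<^sup>i\<close> at target \<open>0\<close>:
  after the query they cancel in the output if \<open>x\<^sub>i = 0\<close>, and both vote for the parity of \<open>i\<close>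
  if \<open>x\<^sub>i = 1\<close>.  Workspace value \<open>2\<close> adds a bias of \<open>-1\<close> towards output \<open>0\<close>, which decides
  the case \<open>x = 0\<close>.\<close>

definition OMB_weight :: "nat \<times> bool \<times> nat \<Rightarrow> real" where
  "OMB_weight s = (case s of (i, b, z) \<Rightarrow> if b then 0 else if z = 2 then (if i = 1 then 1 else 0) else 2 ^ i)"

definition OMB_out :: "nat \<times> bool \<times> nat \<Rightarrow> bool" where
  "OMB_out s = (case s of (i, b, z) \<Rightarrow> if z = 2 then False else if b then odd i else z = 0)"

lemma OMB_weight_nonneg: "0 \<le> OMB_weight s"
  by (auto simp: OMB_weight_def split: prod.splits)

lemma sum_OMB_weight_ge:
  assumes "0 < n"
  shows "4 \<le> (\<Sum>s\<in>QB n 3. OMB_weight s)"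
proof -
  have "(\<Sum>s\<in>{(1, False, 0), (1, False, 1)}. OMB_weight s) \<le> (\<Sum>s\<in>QB n 3. OMB_weight s)"
    using assms by (intro sum_mono2) (auto simp: QB_def OMB_weight_nonneg)
  then show ?thesis
    by (simp add: OMB_weight_def)
qed

lemma OMB_weight_bias:
  assumes "0 < n"
  shows "(\<Sum>s\<in>QB n 3. (if OMB_out s then 1 else -1) * OMB_weight (fst s, fst (snd s) \<noteq> x (fst s), snd (snd s)))
       = signed_weight n x - 1"
proof -
  have "(\<Sum>s\<in>QB n 3. (if OMB_out s then 1 else -1) * OMB_weight (fst s, fst (snd s) \<noteq> x (fst s), snd (snd s)))
      = (\<Sum>i\<in>{1..n}. (if x i then (if odd i then 1 else -1) * 2 ^ (i + 1) else 0) - (if i = 1 then 1 else 0))"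
    unfolding sum_QB_3 by (rule sum.cong) (auto simp: OMB_out_def OMB_weight_def)
  then show ?thesis
    using assms by (simp add: sum_subtractf signed_weight_def sum.delta)
qed

lemma UQ_computes_OMB_1:
  assumes n: "0 < n"
  shows "UQ_computes n (OMB n) 1"
proof -
  let ?S = "QB n 3" and ?e = "(1::nat, False, 0::nat)"
  define W where "W = (\<Sum>s\<in>?S. OMB_weight s)"
  define v where "v s = sqrt (OMB_weight s / W)" for s
  have fS: "finite ?S" and eS: "?e \<in> ?S"
    using n by (simp_all add: QB_def)
  have W: "4 \<le> W"
    unfolding W_def by (rule sum_OMB_weight_ge[OF n])
  have "(\<Sum>s\<in>?S. (v s)\<^sup>2) = 1"
    using W by (simp add: v_def OMB_weight_nonneg sum_divide_distrib[symmetric] W_def)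
  moreover have "v ?e \<noteq> 1"
    using W by (simp add: v_def OMB_weight_def)
  ultimately obtain H where H: "unitary_on ?S H" "\<forall>s\<in>?S. H s ?e = complex_of_real (v s)"
    using householder_reflection[OF fS eS] by blast
  define flip :: "(nat \<Rightarrow> bool) \<Rightarrow> nat \<times> bool \<times> nat \<Rightarrow> nat \<times> bool \<times> nat"
    where "flip x s = (fst s, fst (snd s) \<noteq> x (fst s), snd (snd s))" for x s
  have flip: "flip x s \<in> ?S" "flip x (flip x s) = s" if "s \<in> ?S" for x s
    using that by (auto simp: flip_def QB_def)
  have prob: "(cmod (query_final n 3 x H [perm_matrix id] s))\<^sup>2 = OMB_weight (flip x s) / W"
    if "s \<in> ?S" for x s
    using that flip[OF that] query_final_one_query[OF n, of 3 "fst s"] H(2) W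
    by (cases s) (simp add: v_def flip_def OMB_weight_nonneg)
  have "unitary_on ?S (perm_matrix id)"
    by (rule unitary_on_perm_matrix) (simp_all add: fS)
  moreover have "(\<Sum>s\<in>{s\<in>?S. OMB_out s = OMB n x}. (cmod (query_final n 3 x H [perm_matrix id] s))\<^sup>2) > 1/2"
    for x
  proof -
    have "(\<Sum>s\<in>?S. (cmod (query_final n 3 x H [perm_matrix id] s))\<^sup>2) = (\<Sum>s\<in>?S. OMB_weight (flip x s) / W)"
      by (simp add: prob)
    also have "\<dots> = (\<Sum>s\<in>?S. OMB_weight s / W)"
      by (rule sum.reindex_bij_witness[where i="flip x" and j="flip x"]) (simp_all add: flip)
    also have "\<dots> = 1"
      using W by (simp add: sum_divide_distrib[symmetric] W_def)
    finally have total: "(\<Sum>s\<in>?S. (cmod (query_final n 3 x H [perm_matrix id] s))\<^sup>2) = 1" .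
    have "(\<Sum>s\<in>?S. (if OMB_out s then 1 else -1) * (cmod (query_final n 3 x H [perm_matrix id] s))\<^sup>2)
        = (signed_weight n x - 1) / W"
      using OMB_weight_bias[OF n, of x] by (simp add: prob flip_def sum_divide_distrib[symmetric])
    moreover have "(if OMB n x then 1 else -1) * (signed_weight n x - 1) / W > 0"
      using signed_weight_OMB[of n x] W by (auto simp: divide_neg_pos)
    ultimately show ?thesis
      using prob_gt_half_iff_bias[OF fS total] by simp
  qed
  ultimately show ?thesis
    unfolding UQ_computes_def using H(1)
    by (intro exI[of _ 3] exI[of _ H] exI[of _ "[perm_matrix id]"] exI[of _ OMB_out]) auto
qed

lemma not_UQ_computes_OMB_0:
  assumes n: "0 < n"
  shows "\<not> UQ_computes n (OMB n) 0"
proof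
  assume "UQ_computes n (OMB n) 0"
  then obtain w U0 out where w: "0 < w" and U0: "unitary_on (QB n w) U0"
    and acc: "\<forall>x\<in>bits n. (\<Sum>s\<in>{s\<in>QB n w. out s = OMB n x}. (cmod (query_final n w x U0 [] s))\<^sup>2) > 1/2"
    unfolding UQ_computes_def by auto
  let ?S = "QB n w" and ?e = "(1::nat, False, 0::nat)"
  define fin where "fin = apply_on ?S U0 (ket ?e)"
  have fS: "finite ?S" and eS: "?e \<in> ?S"
    using n w by (simp_all add: QB_def)
  have fin: "query_final n w x U0 [] = fin" for x
    by (simp add: query_final_def fin_def)
  have "(\<Sum>s\<in>?S. (cmod (fin s))\<^sup>2) = (\<Sum>s\<in>?S. (cmod (ket ?e s))\<^sup>2)"
    unfolding fin_def by (rule apply_on_norm[OF fS U0])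
  also have "\<dots> = 1"
    using fS eS by (simp add: ket_def if_distrib[of "\<lambda>x. (cmod x)\<^sup>2"] sum.delta cong: if_cong)
  finally have total: "(\<Sum>s\<in>?S. (cmod (fin s))\<^sup>2) = 1" .
  have "(\<lambda>_. False) \<in> bits n" "(\<lambda>i. i = 1) \<in> bits n" "\<not> OMB n (\<lambda>_. False)" "OMB n (\<lambda>i. i = 1)"
    using n OMB_singleton[of 1 n] by (auto simp: bits_def OMB_def)
  then have "(\<Sum>s\<in>{s\<in>?S. out s = False}. (cmod (fin s))\<^sup>2) > 1/2"
    "(\<Sum>s\<in>{s\<in>?S. out s = True}. (cmod (fin s))\<^sup>2) > 1/2"
    using acc fin by force+
  then show False
    using prob_gt_half_iff_bias[OF fS total, of out False] prob_gt_half_iff_bias[OF fS total, of out True]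
    by simp
qed

definition toggle :: "'a set \<Rightarrow> 'a set \<Rightarrow> 'a set" where
  "toggle E y = (y - E) \<union> (E - y)"

lemma toggle_toggle [simp]: "toggle E (toggle E y) = y"
  by (auto simp: toggle_def)

definition input_qubits :: "nat \<Rightarrow> (nat \<Rightarrow> bool) \<Rightarrow> nat set" where
  "input_qubits n a = {q. q < n \<and> a (Suc q)}"

text \<open>Alice writes \<open>a\<close> into qubits \<open>0..<n\<close> and sends them all to Bob, who owns qubit \<open>n\<close> and
  flips it iff \<open>DOMB\<^sub>n(a, b)\<close>; qubit \<open>q\<close> holds bit \<open>q + 1\<close>.\<close>

definition DOMB_protocol :: "nat \<Rightarrow> cstep list" where
  "DOMB_protocol n =
     Local False (\<lambda>a. perm_matrix (toggle (input_qubits n a))) #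
     map Send [0..<n] @
     [Local True (\<lambda>b. perm_matrix (\<lambda>y. if OMB n (\<lambda>i. i - 1 \<in> y \<and> b i) then toggle {n} y else y))]"

lemma owned_all_True:
  assumes "\<And>q. q < N \<Longrightarrow> own q"
  shows "owned N own True = {0..<N}"
  using assms by (auto simp: owned_def)

lemma fold_Send_upt:
  "fold (cstep_sem N a b) (map Send [0..<m]) (own, v) = (\<lambda>q. if q < m then \<not> own q else own q, v)"
  by (induction m) (auto simp: fun_eq_iff)

lemma valid_steps_Send_upt:
  "m \<le> N \<Longrightarrow> valid_steps N X Y (\<lambda>q. if q < m then \<not> own q else own q) st \<Longrightarrow>
   valid_steps N X Y own (map Send [0..<m] @ st)"
proof (induction m arbitrary: st)
  case (Suc m)
  have "(\<lambda>q. if q < m then \<not> own q else own q)(m := \<not> own m) = (\<lambda>q. if q < Suc m then \<not> own q else own q)"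
    by (rule ext) auto
  then show ?case
    using Suc by simp
qed simp

lemma valid_DOMB_protocol: "valid_steps (Suc n) (bits n) (bits n) (\<lambda>q. q = n) (DOMB_protocol n)"
proof -
  have "OMB n (\<lambda>i. i - 1 \<in> toggle {n} y \<and> b i) = OMB n (\<lambda>i. i - 1 \<in> y \<and> b i)" for b y
    by (rule OMB_cong) (auto simp: toggle_def)
  then have Bob: "unitary_on (Pow {0..<Suc n})
      (perm_matrix (\<lambda>y. if OMB n (\<lambda>i. i - 1 \<in> y \<and> b i) then toggle {n} y else y))" for b
    by (intro unitary_on_perm_matrix) (auto simp: toggle_def)
  moreover have "owned (Suc n) (\<lambda>q. if q < n then \<not> q = n else q = n) True = {0..<Suc n}"
    by (rule owned_all_True) simp
  ultimately have "valid_steps (Suc n) (bits n) (bits n) (\<lambda>q. if q < n then \<not> q = n else q = n)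
      [Local True (\<lambda>b. perm_matrix (\<lambda>y. if OMB n (\<lambda>i. i - 1 \<in> y \<and> b i) then toggle {n} y else y))]"
    by (simp only: valid_steps.simps if_True) simp
  then have "valid_steps (Suc n) (bits n) (bits n) (\<lambda>q. q = n) (map Send [0..<n] @
      [Local True (\<lambda>b. perm_matrix (\<lambda>y. if OMB n (\<lambda>i. i - 1 \<in> y \<and> b i) then toggle {n} y else y))])"
    by (rule valid_steps_Send_upt[rotated]) simp
  moreover have "unitary_on (Pow {0..<n}) (perm_matrix (toggle (input_qubits n a)))" for a
    by (rule unitary_on_perm_matrix) (auto simp: toggle_def input_qubits_def)
  moreover have "owned (Suc n) (\<lambda>q. q = n) False = {0..<n}"
    by (auto simp: owned_def)
  ultimately show ?thesis
    unfolding DOMB_protocol_def by simp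
qed

lemma run_DOMB_protocol:
  "snd (run_protocol (Suc n) (\<lambda>q. q = n) (DOMB_protocol n) a b) =
     ket (if DOMB n a b then insert n (input_qubits n a) else input_qubits n a)"
proof -
  have "input_qubits n a \<subseteq> {0..<n}"
    by (auto simp: input_qubits_def)
  then have Alice: "local_op (Suc n) {0..<n} (perm_matrix (toggle (input_qubits n a))) (ket {}) = ket (input_qubits n a)"
    using local_op_perm_matrix_ket[of "{0..<n}" "Suc n" "{}" "toggle (input_qubits n a)"]
    by (simp add: toggle_def)
  define \<pi> where "\<pi> = (\<lambda>y. if OMB n (\<lambda>i. i - 1 \<in> y \<and> b i) then toggle {n} y else y)"
  have "OMB n (\<lambda>i. i - 1 \<in> input_qubits n a \<and> b i) = DOMB n a b"
    unfolding DOMB_def by (rule OMB_cong) (auto simp: input_qubits_def)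
  moreover have "n \<notin> input_qubits n a"
    by (simp add: input_qubits_def)
  ultimately have \<pi>_input: "\<pi> (input_qubits n a) = (if DOMB n a b then insert n (input_qubits n a) else input_qubits n a)"
    by (auto simp: \<pi>_def toggle_def)
  have inside: "input_qubits n a \<inter> {0..<Suc n} = input_qubits n a" "input_qubits n a - {0..<Suc n} = {}"
    by (auto simp: input_qubits_def)
  have "local_op (Suc n) {0..<Suc n} (perm_matrix \<pi>) (ket (input_qubits n a))
    = ket ((input_qubits n a - {0..<Suc n}) \<union> \<pi> (input_qubits n a \<inter> {0..<Suc n}))"
    by (rule local_op_perm_matrix_ket) (use inside \<pi>_input in \<open>auto simp: input_qubits_def\<close>)
  then have Bob: "local_op (Suc n) {0..<Suc n} (perm_matrix \<pi>) (ket (input_qubits n a))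
    = ket (if DOMB n a b then insert n (input_qubits n a) else input_qubits n a)"
    unfolding inside \<pi>_input by simp
  have "owned (Suc n) (\<lambda>q. q = n) False = {0..<n}"
    by (auto simp: owned_def)
  then show ?thesis
    using Alice Bob unfolding \<pi>_def run_protocol_def DOMB_protocol_def
    by (simp add: fold_Send_upt owned_all_True less_Suc_eq)
qed

lemma UQC_computes_DOMB: "UQC_computes n (DOMB n) (comm_cost (DOMB_protocol n))"
proof -
  have "(\<Sum>z\<in>{z\<in>Pow {0..<Suc n}. (n \<in> z) = DOMB n a b}.
          (cmod (snd (run_protocol (Suc n) (\<lambda>q. q = n) (DOMB_protocol n) a b) z))\<^sup>2) = 1" for a b
    unfolding run_DOMB_protocol
    by (simp add: ket_def if_distrib[of "\<lambda>x. (cmod x)\<^sup>2"] sum.delta cong: if_cong)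
       (auto simp: input_qubits_def)
  then show ?thesis
    unfolding UQC_computes_def using valid_DOMB_protocol
    by (intro exI[of _ "Suc n"] exI[of _ "\<lambda>q. q = n"] exI[of _ "DOMB_protocol n"] exI[of _ n]) auto
qed

section \<open>The lower bound for DOMB\<close>

definition pair_block :: "nat \<Rightarrow> nat \<Rightarrow> bool" where
  "pair_block j i \<longleftrightarrow> i = 2 * j + 1 \<or> i = 2 * j + 2"

definition pair_choice :: "nat \<Rightarrow> nat set \<Rightarrow> nat \<Rightarrow> bool" where
  "pair_choice s T i \<longleftrightarrow> (\<exists>j<s. i = (if j \<in> T then 2 * j + 1 else 2 * j + 2))"

lemma DOMB_pair_choice_block:
  assumes "j < n div 2"
  shows "DOMB n (pair_choice (n div 2) T) (pair_block j) \<longleftrightarrow> j \<in> T"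
proof -
  define k where "k = (if j \<in> T then 2 * j + 1 else 2 * j + 2)"
  have "pair_choice (n div 2) T i \<and> pair_block j i \<longleftrightarrow> i = k" for i
    using assms unfolding pair_choice_def pair_block_def k_def by (cases "j \<in> T") (auto, presburger+)
  moreover have "k \<in> {1..n}"
    using assms by (auto simp: k_def)
  ultimately show ?thesis
    unfolding DOMB_def using OMB_singleton[of k n] by (simp add: k_def)
qed

lemma UQC_computes_DOMB_ge:
  assumes "UQC_computes n (DOMB n) c" and "0 < n"
  shows "(log 2 (real n) - 3) / 2 \<le> real c"
proof -
  obtain \<phi> \<psi> where sign: "\<forall>a\<in>bits n. \<forall>b\<in>bits n.
       (DOMB n a b \<longrightarrow> (\<Sum>i\<in>bias_index c. \<phi> a i * \<psi> b i) > (0::real))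
     \<and> (\<not> DOMB n a b \<longrightarrow> (\<Sum>i\<in>bias_index c. \<phi> a i * \<psi> b i) < 0)"
    using UQC_computes_sign_bilinear[OF assms(1)] by blast
  have "pair_block j \<in> bits n" if "j < n div 2" for j
    using that by (auto simp: pair_block_def bits_def)
  moreover have "pair_choice (n div 2) T \<in> bits n" for T
    by (auto simp: pair_choice_def bits_def split: if_splits)
  ultimately have "n div 2 \<le> card (bias_index c)"
    using sign DOMB_pair_choice_block
    by (intro sign_pattern_card_le[OF finite_bias_index, of _ "\<lambda>T. \<phi> (pair_choice (n div 2) T)" "\<lambda>j. \<psi> (pair_block j)"]) auto
  then have "n \<le> 2 * 2 ^ (2 * c + 1) + 1"
    by (simp add: card_bias_index)
  also have "\<dots> \<le> 2 ^ (2 * c + 3)"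
    using one_le_power[of "2::nat" "2 * c"] by (simp add: power_add)
  finally have "real n \<le> 2 ^ (2 * c + 3)"
    by (simp flip: of_nat_le_iff)
  then have "log 2 (real n) \<le> log 2 (2 ^ (2 * c + 3))"
    using assms(2) by (subst log_le_cancel_iff) auto
  then show ?thesis
    by (simp add: log_nat_power)
qed

theorem theorem3:
  fixes n :: nat
  assumes "0 < n"
  shows "UQ n (OMB n) = 1 \<and> real (UQC n (DOMB n)) \<ge> (log 2 (real n) - 3) / 2"
proof
  show "UQ n (OMB n) = 1"
    unfolding UQ_def
  proof (rule Least_equality)
    show "UQ_computes n (OMB n) 1"
      by (rule UQ_computes_OMB_1[OF assms])
    show "1 \<le> T" if "UQ_computes n (OMB n) T" for T
      using that not_UQ_computes_OMB_0[OF assms] by (cases T) auto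
  qed
  have "UQC_computes n (DOMB n) (UQC n (DOMB n))"
    unfolding UQC_def by (rule LeastI) (rule UQC_computes_DOMB)
  then show "real (UQC n (DOMB n)) \<ge> (log 2 (real n) - 3) / 2"
    by (rule UQC_computes_DOMB_ge[OF _ assms])
qed

end
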